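(* Let $\beta_{ij}$ ($i\neq j$, $i,j=1,\dots,N$) be smooth functions of $\boldsymbol u=(u_1,\dots,u_N)$ satisfying the Lamé equations $$\frac{\partial\beta_{ij}}{\partial u_k}=\beta_{ik}\beta_{kj}\ (i,j,k \text{ distinct}),\qquad \frac{\partial\beta_{ij}}{\partial u_i}+\frac{\partial\beta_{ji}}{\partial u_j}+\sum_{k\neq i,j}\beta_{ki}\beta_{kj}=0\ (i\neq j).$$ Let $\boldsymbol\xi_i$ ($\mathbb R^M$-valued) and $\boldsymbol\zeta_i$ ($\mathbb R^L$-valued), $i=1,\dots,N$, satisfy $\frac{\partial\boldsymbol\xi_j}{\partial u_i}=\beta_{ji}\boldsymbol\xi_i$ and $\frac{\partial\boldsymbol\zeta_j}{\partial u_i}=\beta_{ji}\boldsymbol\zeta_i$ for $i\neq j$, and set $$\boldsymbol\xi^*_i=\Big(\frac{\partial\boldsymbol\xi_i}{\partial u_i}+\sum_{k\neq i}\boldsymbol\xi_k\beta_{ki}\Big)^{T},\qquad \boldsymbol\zeta^*_i=\Big(\frac{\partial\boldsymbol\zeta_i}{\partial u_i}+\sum_{k\neq i}\boldsymbol\zeta_k\beta_{ki}\Big)^{T}.$$ Let $\Omega(\boldsymbol\xi,\boldsymbol\zeta^* )$ be an $M\times L$ matrix function and $\Omega(\boldsymbol\zeta,\boldsymbol\xi^* )$ an $L\times M$ matrix function with $\frac{\partial\Omega(\boldsymbol\xi,\boldsymbol\zeta^* )}{\partial u_i}=\boldsymbol\xi_i\boldsymbol\zeta^*_i$ and $\frac{\partial\Omega(\boldsymbol\zeta,\boldsymbol\xi^*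 )}{\partial u_i}=\boldsymbol\zeta_i\boldsymbol\xi^*_i$ for all $i$. Then for every $i=1,\dots,N$, $$\frac{\partial}{\partial u_i}\Big(\Omega(\boldsymbol\xi,\boldsymbol\zeta^* )+\Omega(\boldsymbol\zeta,\boldsymbol\xi^* )^{T}-\sum_{k=1}^N\boldsymbol\xi_k\boldsymbol\zeta_k^{T}\Big)=0.$$
   Context: Vectors are columns, starred quantities are row vectors, ${}^T$ is transpose, and products such as $\boldsymbol\xi_i\boldsymbol\zeta^*_i$ denote the outer (column times row) product. All functions are smooth on an open domain of $\mathbb R^N$. *)

theory Defs
  imports "HOL-Analysis.Analysis"
begin

definition pd :: "'n::finite \<Rightarrow> (real^'n \<Rightarrow> 'a::real_normed_vector) \<Rightarrow> real^'n \<Rightarrow> 'a" where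
  "pd i f u = vector_derivative (\<lambda>t. f (u + t *\<^sub>R axis i 1)) (at 0)"

fun iter_pd :: "'n::finite list \<Rightarrow> (real^'n \<Rightarrow> 'a::real_normed_vector) \<Rightarrow> real^'n \<Rightarrow> 'a" where
  "iter_pd [] f = f"
| "iter_pd (i # is) f = pd i (iter_pd is f)"

definition smooth_on :: "(real^'n::finite) set \<Rightarrow> (real^'n \<Rightarrow> 'a::real_normed_vector) \<Rightarrow> bool" where
  "smooth_on U f \<longleftrightarrow> (\<forall>is. iter_pd is f differentiable_on U)"

definition outer :: "real^'m \<Rightarrow> real^'l \<Rightarrow> real^'l^'m" where
  "outer x y = (\<chi> a b. x $ a * y $ b)"

text \<open>The starred row vectors: (d xi_i/d u_i + sum_{k<>i} xi_k beta_ki)^T, stored as a vector.\<close>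
definition star :: "('n::finite \<Rightarrow> 'n \<Rightarrow> real^'n \<Rightarrow> real) \<Rightarrow> ('n \<Rightarrow> real^'n \<Rightarrow> real^'m) \<Rightarrow> 'n \<Rightarrow> real^'n \<Rightarrow> real^'m" where
  "star \<beta> \<xi> i u = pd i (\<xi> i) u + (\<Sum>k\<in>UNIV - {i}. \<beta> k i u *\<^sub>R \<xi> k u)"

end

theory Submission
  imports Defs
begin

(* Along u_i the product rule gives
     d_i (Omega1 + Omega2^T - sum_k xi_k zeta_k^T)
       = xi_i (star zeta)_i^T + (star xi)_i zeta_i^T - sum_k (xi_k (d_i zeta_k)^T + (d_i xi_k) zeta_k^T).
   Expanding the starred vectors, the summand k = i cancels the terms containing d_i xi_i and
   d_i zeta_i, and for k <> i the linear equations turn the summand into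
   beta_ki (xi_k zeta_i^T + xi_i zeta_k^T), which cancels the remaining terms. *)

lemma bounded_linear_transpose:
  "bounded_linear (transpose :: real^'b::finite^'a::finite \<Rightarrow> real^'a^'b)"
  by (rule linear_conv_bounded_linear[THEN iffD1], rule linearI)
     (simp_all add: vec_eq_iff transpose_def)

lemma bounded_bilinear_outer:
  "bounded_bilinear (outer :: real^'a::finite \<Rightarrow> real^'b::finite \<Rightarrow> real^'b^'a)"
  unfolding bilinear_conv_bounded_bilinear[symmetric] bilinear_def
  by (intro conjI allI linearI) (simp_all add: vec_eq_iff outer_def algebra_simps)

lemma transpose_outer: "transpose (outer x y) = outer y x"
  by (simp add: vec_eq_iff transpose_def outer_def mult.commute)

lemma has_vector_derivative_pd:
  fixes F :: "real^'n::finite \<Rightarrow> 'a::real_normed_vector"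
  assumes "F differentiable (at u)"
  shows "((\<lambda>t. F (u + t *\<^sub>R axis i 1)) has_vector_derivative pd i F u) (at 0)"
proof -
  have "(\<lambda>t::real. u + t *\<^sub>R axis i 1) differentiable (at 0)"
    by (intro differentiable_add differentiable_scaleR differentiable_const differentiable_ident)
  then have "(F \<circ> (\<lambda>t. u + t *\<^sub>R axis i 1)) differentiable (at 0)"
    by (rule differentiable_chain_at) (simp add: assms)
  then show ?thesis
    unfolding pd_def o_def by (simp add: vector_derivative_works)
qed

lemma pd_eqI:
  "((\<lambda>t. F (u + t *\<^sub>R axis i 1)) has_vector_derivative D) (at 0) \<Longrightarrow> pd i F u = D"
  unfolding pd_def by (rule vector_derivative_at)

lemma smooth_on_imp_differentiable_at:
  assumes "smooth_on U f" "open U" "u \<in> U"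
  shows "f differentiable (at u)"
proof -
  have "iter_pd [] f differentiable_on U"
    using assms(1) unfolding smooth_on_def by blast
  with assms(2,3) show ?thesis
    by (simp add: differentiable_on_eq_differentiable_at)
qed

lemma outer_star_add_transpose_eq_sum:
  fixes x dx :: "'n::finite \<Rightarrow> real^'m::finite" and y dy :: "'n \<Rightarrow> real^'l::finite"
  assumes dx: "\<And>k. k \<noteq> i \<Longrightarrow> dx k = b k *\<^sub>R x i"
    and dy: "\<And>k. k \<noteq> i \<Longrightarrow> dy k = b k *\<^sub>R y i"
  shows "outer (x i) (dy i + (\<Sum>k\<in>UNIV - {i}. b k *\<^sub>R y k))
           + transpose (outer (y i) (dx i + (\<Sum>k\<in>UNIV - {i}. b k *\<^sub>R x k)))
         = (\<Sum>k\<in>UNIV. outer (x k) (dy k) + outer (dx k) (y k))"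
proof -
  interpret outer: bounded_bilinear outer
    by (rule bounded_bilinear_outer)
  have "outer (x i) (dy i + (\<Sum>k\<in>UNIV - {i}. b k *\<^sub>R y k))
          + transpose (outer (y i) (dx i + (\<Sum>k\<in>UNIV - {i}. b k *\<^sub>R x k)))
        = outer (x i) (dy i) + outer (dx i) (y i)
          + (\<Sum>k\<in>UNIV - {i}. outer (x k) (b k *\<^sub>R y i) + outer (b k *\<^sub>R x i) (y k))"
    unfolding transpose_outer
    by (simp add: outer.add_left outer.add_right outer.sum_left outer.sum_right
        outer.scaleR_left outer.scaleR_right sum.distrib)
  also have "\<dots> = outer (x i) (dy i) + outer (dx i) (y i)
          + (\<Sum>k\<in>UNIV - {i}. outer (x k) (dy k) + outer (dx k) (y k))"
    by (simp add: dx dy)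
  also have "\<dots> = (\<Sum>k\<in>UNIV. outer (x k) (dy k) + outer (dx k) (y k))"
    by (simp add: sum.remove[of UNIV i])
  finally show ?thesis .
qed

theorem lemma2:
  fixes U :: "(real^'n::finite) set"
    and \<beta> :: "'n \<Rightarrow> 'n \<Rightarrow> real^'n \<Rightarrow> real"
    and \<xi> :: "'n \<Rightarrow> real^'n \<Rightarrow> real^'m::finite"
    and \<zeta> :: "'n \<Rightarrow> real^'n \<Rightarrow> real^'l::finite"
    and \<Omega>1 :: "real^'n \<Rightarrow> real^'l^'m"
    and \<Omega>2 :: "real^'n \<Rightarrow> real^'m^'l"
  assumes U: "open U"
    and sm_beta: "\<And>i j. i \<noteq> j \<Longrightarrow> smooth_on U (\<beta> i j)"
    and sm_xi: "\<And>i. smooth_on U (\<xi> i)"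
    and sm_zeta: "\<And>i. smooth_on U (\<zeta> i)"
    and sm_O1: "smooth_on U \<Omega>1"
    and sm_O2: "smooth_on U \<Omega>2"
    and lame1: "\<And>i j k u. u \<in> U \<Longrightarrow> i \<noteq> j \<Longrightarrow> j \<noteq> k \<Longrightarrow> i \<noteq> k \<Longrightarrow>
                  pd k (\<beta> i j) u = \<beta> i k u * \<beta> k j u"
    and lame2: "\<And>i j u. u \<in> U \<Longrightarrow> i \<noteq> j \<Longrightarrow>
                  pd i (\<beta> i j) u + pd j (\<beta> j i) u + (\<Sum>k\<in>UNIV - {i, j}. \<beta> k i u * \<beta> k j u) = 0"
    and xi_eq: "\<And>i j u. u \<in> U \<Longrightarrow> i \<noteq> j \<Longrightarrow> pd i (\<xi> j) u = \<beta> j i u *\<^sub>R \<xi> i u"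
    and zeta_eq: "\<And>i j u. u \<in> U \<Longrightarrow> i \<noteq> j \<Longrightarrow> pd i (\<zeta> j) u = \<beta> j i u *\<^sub>R \<zeta> i u"
    and O1_eq: "\<And>i u. u \<in> U \<Longrightarrow> pd i \<Omega>1 u = outer (\<xi> i u) (star \<beta> \<zeta> i u)"
    and O2_eq: "\<And>i u. u \<in> U \<Longrightarrow> pd i \<Omega>2 u = outer (\<zeta> i u) (star \<beta> \<xi> i u)"
  shows "\<forall>i. \<forall>u\<in>U. pd i (\<lambda>v. \<Omega>1 v + transpose (\<Omega>2 v) - (\<Sum>k\<in>UNIV. outer (\<xi> k v) (\<zeta> k v))) u = 0"
proof (intro allI ballI)
  fix i u assume u: "u \<in> U"
  note diff = smooth_on_imp_differentiable_at[OF _ U u]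
  let ?line = "\<lambda>t::real. u + t *\<^sub>R axis i 1"
  have "((\<lambda>t. \<Omega>1 (?line t) + transpose (\<Omega>2 (?line t))
            - (\<Sum>k\<in>UNIV. outer (\<xi> k (?line t)) (\<zeta> k (?line t))))
        has_vector_derivative
          pd i \<Omega>1 u + transpose (pd i \<Omega>2 u)
          - (\<Sum>k\<in>UNIV. outer (\<xi> k u) (pd i (\<zeta> k) u) + outer (pd i (\<xi> k) u) (\<zeta> k u))) (at 0)"
    using bounded_bilinear.has_vector_derivative[OF bounded_bilinear_outer
        has_vector_derivative_pd[OF diff[OF sm_xi]] has_vector_derivative_pd[OF diff[OF sm_zeta]]]
    by (intro has_vector_derivative_diff has_vector_derivative_add has_vector_derivative_sum
        has_vector_derivative_pd[OF diff[OF sm_O1]]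
        bounded_linear.has_vector_derivative[OF bounded_linear_transpose]
        has_vector_derivative_pd[OF diff[OF sm_O2]]) simp_all
  moreover have "pd i \<Omega>1 u + transpose (pd i \<Omega>2 u)
      = (\<Sum>k\<in>UNIV. outer (\<xi> k u) (pd i (\<zeta> k) u) + outer (pd i (\<xi> k) u) (\<zeta> k u))"
    unfolding O1_eq[OF u] O2_eq[OF u] star_def
    by (rule outer_star_add_transpose_eq_sum) (simp_all add: xi_eq[OF u] zeta_eq[OF u])
  ultimately show "pd i (\<lambda>v. \<Omega>1 v + transpose (\<Omega>2 v) - (\<Sum>k\<in>UNIV. outer (\<xi> k v) (\<zeta> k v))) u = 0"
    by (auto intro: pd_eqI)
qed

end
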